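(* Let $\{X_t\}_{t\ge1}$ be generated by random shuffling over $[n]$: time is split into consecutive epochs of length $n$, and in each epoch the sequence traverses a permutation of $[n]$ drawn uniformly at random, independently across epochs. Define the augmented process $s_t=(\{A^{(t)}_j\}_{j\in[n]},c_t)$, where $\{A^{(t)}_j\}_{j\in[n]}=(X_{t-n+1},X_{t-n+2},\dots,X_t)$ is the history of the last $n$ indices up to time $t$ and $c_t\in\{1,\dots,n\}$ is the position of time $t$ within its current epoch, with state space $\mathcal S$ consisting of all proper pairs (those that can occur under random shuffling). Then $\{s_t\}$ is a finite, irreducible and periodic Markov chain with period $n$.
   Context: A pair $(\{A_j\}_{j\in[n]},c)$ is proper if the sequence $A_1,\dots,A_n$ together with the epoch position $c$ is consistent with shuffling without replacement, i.e. its last $c$ entries are distinct and form the beginning of an epoch, and its first $n-c$ entries are distinct and form the end of the previous epoch. *)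

theory Defs
  imports "HOL-Probability.Probability"
begin

definition perms :: "nat \<Rightarrow> nat list set" where
  "perms n = {p. distinct p \<and> set p = {1..n}}"

fun shuffling :: "nat \<Rightarrow> nat \<Rightarrow> nat list pmf" where
  "shuffling n 0 = return_pmf []"
| "shuffling n (Suc m) =
     bind_pmf (shuffling n m) (\<lambda>xs. bind_pmf (pmf_of_set (perms n)) (\<lambda>p. return_pmf (xs @ p)))"

text \<open>X_t (1-indexed) of a realisation xs.\<close>
definition X :: "nat list \<Rightarrow> nat \<Rightarrow> nat" where
  "X xs t = xs ! (t - 1)"

text \<open>Augmented state s_t = ((X_{t-n+1},...,X_t), c_t), defined for t \<ge> n;
  c_t \<in> {1..n} is the position of time t in its epoch.\<close>
definition aug_state :: "nat \<Rightarrow> nat list \<Rightarrow> nat \<Rightarrow> nat list \<times> nat" where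
  "aug_state n xs t = (map (\<lambda>j. X xs (t - n + j)) [1..<n+1], (t - 1) mod n + 1)"

definition proper :: "nat \<Rightarrow> nat list \<times> nat \<Rightarrow> bool" where
  "proper n s = (case s of (A, c) \<Rightarrow>
     length A = n \<and> set A \<subseteq> {1..n} \<and> c \<in> {1..n} \<and>
     distinct (drop (n - c) A) \<and> distinct (take (n - c) A))"

definition state_space :: "nat \<Rightarrow> (nat list \<times> nat) set" where
  "state_space n = {s. proper n s}"

fun kstep :: "('s \<Rightarrow> 's \<Rightarrow> real) \<Rightarrow> 's set \<Rightarrow> nat \<Rightarrow> 's \<Rightarrow> 's \<Rightarrow> real" where
  "kstep K S 0 x y = (if x = y then 1 else 0)"
| "kstep K S (Suc k) x y = (\<Sum>z\<in>S. kstep K S k x z * K z y)"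

definition stochastic_on :: "('s \<Rightarrow> 's \<Rightarrow> real) \<Rightarrow> 's set \<Rightarrow> bool" where
  "stochastic_on K S = (\<forall>x\<in>S. (\<forall>y\<in>S. K x y \<ge> 0) \<and> (\<Sum>y\<in>S. K x y) = 1)"

definition irreducible_on :: "('s \<Rightarrow> 's \<Rightarrow> real) \<Rightarrow> 's set \<Rightarrow> bool" where
  "irreducible_on K S = (\<forall>x\<in>S. \<forall>y\<in>S. \<exists>k. kstep K S k x y > 0)"

definition period :: "('s \<Rightarrow> 's \<Rightarrow> real) \<Rightarrow> 's set \<Rightarrow> 's \<Rightarrow> nat" where
  "period K S x = Gcd {k. k > 0 \<and> kstep K S k x x > 0}"

text \<open>The process (s_t)_{t\<ge>n} is a (time-homogeneous) Markov chain on S with kernel K: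
  s_t \<in> S almost surely, and path probabilities factor through K.
  The finite horizon m (number of epochs simulated) is arbitrary as long as it covers the times.\<close>
definition markov_with :: "nat \<Rightarrow> (nat list \<times> nat \<Rightarrow> nat list \<times> nat \<Rightarrow> real) \<Rightarrow> bool" where
  "markov_with n K =
    ((\<forall>m t. n \<le> t \<longrightarrow> t \<le> m * n \<longrightarrow>
        measure_pmf.prob (shuffling n m) {xs. aug_state n xs t \<in> state_space n} = 1) \<and>
     (\<forall>m t y. n \<le> t \<longrightarrow> t + 1 \<le> m * n \<longrightarrow>
        measure_pmf.prob (shuffling n m) {xs. \<forall>i\<in>{n..t+1}. aug_state n xs i = y i}
        = measure_pmf.prob (shuffling n m) {xs. \<forall>i\<in>{n..t}. aug_state n xs i = y i}
          * K (y t) (y (t+1))))"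

end

(*
  Given the past, the next index of a random shuffle is uniform over the symbols not yet drawn
  in the current epoch. These symbols can be read off from the augmented state (A, c): unless
  the epoch is complete (c = n), they are the symbols outside the last c entries of A. Hence the
  path probabilities of the augmented process factor through a kernel that picks a fresh
  symbol uniformly and shifts it into the window. A pair is proper exactly when A is the
  end of one permutation followed by the beginning of another, so concatenating suitable
  permutations yields a realisation through any two proper states: the chain is irreducible.
  The position c advances by one modulo n in every step, so return times are multiples
  of n, while returns after 2n and 3n steps occur; the period is n.
*)
theory Submission
  imports Defs "HOL-Combinatorics.Multiset_Permutations"
begin

lemma permutations_of_set_with_prefix:
  assumes "distinct u" "set u \<subseteq> A"
  shows "permutations_of_set A \<inter> {p. take (length u) p = u} = (\<lambda>v. u @ v) ` permutations_of_set (A - set u)"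
proof (intro equalityI subsetI)
  fix p assume "p \<in> permutations_of_set A \<inter> {p. take (length u) p = u}"
  then have perm: "set p = A" "distinct p" and prefix: "take (length u) p = u"
    by (auto simp: permutations_of_set_def)
  define v where "v = drop (length u) p"
  have p: "p = u @ v"
    unfolding v_def using prefix by (metis append_take_drop_id)
  have "v \<in> permutations_of_set (A - set u)"
    using perm unfolding p by (auto simp: permutations_of_set_def)
  then show "p \<in> (\<lambda>v. u @ v) ` permutations_of_set (A - set u)"
    unfolding p by (rule imageI)
next
  fix p assume "p \<in> (\<lambda>v. u @ v) ` permutations_of_set (A - set u)"
  with assms show "p \<in> permutations_of_set A \<inter> {p. take (length u) p = u}"
    by (auto simp: permutations_of_set_def)
qed

lemma card_permutations_of_set_with_prefix:
  assumes "finite A"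
  shows "card (permutations_of_set A \<inter> {p. take (length u) p = u}) =
    (if distinct u \<and> set u \<subseteq> A then fact (card A - length u) else 0)"
proof (cases "distinct u \<and> set u \<subseteq> A")
  case True
  have "card ((\<lambda>v. u @ v) ` permutations_of_set (A - set u)) = card (permutations_of_set (A - set u))"
    by (rule card_image) (simp add: inj_on_def)
  also have "\<dots> = fact (card A - length u)"
    using True assms by (simp add: card_Diff_subset distinct_card)
  finally show ?thesis
    using True by (simp add: permutations_of_set_with_prefix)
next
  case False
  have "\<not> (set p = A \<and> distinct p \<and> take (length u) p = u)" for p
    using False by (metis distinct_take set_take_subset)
  then have "permutations_of_set A \<inter> {p. take (length u) p = u} = {}"
    by (auto simp: permutations_of_set_def)
  with False show ?thesis
    by simp
qed


lemma prob_permutation_prefix: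
  assumes "finite A"
  shows "measure_pmf.prob (pmf_of_set (permutations_of_set A)) {p. take (length u) p = u} =
    (if distinct u \<and> set u \<subseteq> A then fact (card A - length u) / fact (card A) else 0)"
  using assms by (simp add: measure_pmf_of_set card_permutations_of_set_with_prefix)

lemma prob_permutation_prefix_snoc:
  assumes "finite A"
  shows "measure_pmf.prob (pmf_of_set (permutations_of_set A)) {p. take (length (u @ [a])) p = u @ [a]} =
    measure_pmf.prob (pmf_of_set (permutations_of_set A)) {p. take (length u) p = u} *
    (if a \<in> A - set u then 1 / real (card A - length u) else 0)"
proof (cases "distinct u \<and> set u \<subseteq> A \<and> a \<in> A - set u")
  case True
  then have "card (set u) < card A"
    using assms by (intro psubset_card_mono) auto
  then have "length u < card A"
    using True by (simp add: distinct_card)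
  then have "(fact (card A - length u) :: real) = real (card A - length u) * fact (card A - Suc (length u))"
    by (metis Suc_diff_Suc fact_Suc)
  with True \<open>length u < card A\<close> show ?thesis
    unfolding prob_permutation_prefix[OF assms] by simp
next
  case False
  then show ?thesis
    unfolding prob_permutation_prefix[OF assms] by auto
qed

lemma prob_prefix_append_pair:
  fixes M N :: "'a :: countable list pmf"
  assumes "\<And>xs. xs \<in> set_pmf M \<Longrightarrow> length xs = L"
  shows "measure_pmf.prob (map_pmf (\<lambda>(xs, ys). xs @ ys) (pair_pmf M N)) {zs. take (length w) zs = w} =
    measure_pmf.prob M {xs. take (length (take L w)) xs = take L w} *
    measure_pmf.prob N {ys. take (length (drop L w)) ys = drop L w}"
proof -
  let ?E = "{xs. take (length (take L w)) xs = take L w} \<times> {ys. take (length (drop L w)) ys = drop L w}"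
  have "take (length w) (xs @ ys) = w \<longleftrightarrow> (xs, ys) \<in> ?E" if "length xs = L" for xs ys :: "'a list"
    using that by (cases "length w \<le> L") (simp_all add: append_eq_conv_conj min_def)
  then have "measure_pmf.prob (pair_pmf M N) {(xs, ys). take (length w) (xs @ ys) = w} =
      measure_pmf.prob (pair_pmf M N) ?E"
    using assms by (intro measure_pmf.finite_measure_eq_AE) (auto simp: AE_measure_pmf_iff)
  then show ?thesis
    by (simp add: measure_pmf_prob_product case_prod_unfold vimage_def)
qed

lemma drop_mult_concat:
  assumes "\<forall>p\<in>set ps. length p = n"
  shows "drop (q * n) (concat ps) = concat (drop q ps)"
  using assms
proof (induction ps arbitrary: q)
  case (Cons p ps)
  then show ?case
    by (cases q) simp_all
qed simp

section \<open>Multi-step transition probabilities\<close>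

lemma kstep_nonneg:
  assumes "\<And>x y. 0 \<le> K x y"
  shows "0 \<le> kstep K S k x y"
  by (induction k arbitrary: y) (auto intro!: sum_nonneg mult_nonneg_nonneg assms)

lemma kstep_Suc_pos:
  assumes "\<And>x y. 0 \<le> K x y" "finite S" "z \<in> S"
    and "0 < kstep K S k x z" "0 < K z y"
  shows "0 < kstep K S (Suc k) x y"
proof -
  have "0 < kstep K S k x z * K z y"
    using assms(4,5) by simp
  also have "\<dots> \<le> (\<Sum>z\<in>S. kstep K S k x z * K z y)"
    using assms(1-3) kstep_nonneg[OF assms(1)] by (intro member_le_sum mult_nonneg_nonneg) auto
  finally show ?thesis
    by simp
qed

lemma period_eqI:
  assumes "\<And>k. 0 < k \<Longrightarrow> 0 < kstep K S k x x \<Longrightarrow> d dvd k"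
    and "0 < kstep K S (2 * d) x x" "0 < kstep K S (3 * d) x x" "0 < d"
  shows "period K S x = d"
proof -
  let ?R = "{k. 0 < k \<and> 0 < kstep K S k x x}"
  have "d dvd Gcd ?R"
    using assms(1) by (intro Gcd_greatest) auto
  moreover have "Gcd ?R dvd 3 * d - 2 * d"
    using assms(2-4) by (intro dvd_diff_nat Gcd_dvd) auto
  ultimately show ?thesis
    unfolding period_def by (simp add: dvd_antisym)
qed

section \<open>Random shuffling\<close>

lemma perms_eq_permutations_of_set: "perms n = permutations_of_set {1..n}"
  unfolding perms_def permutations_of_set_def by auto

lemma finite_perms: "finite (perms n)"
  by (simp add: perms_eq_permutations_of_set)

lemma perms_nonempty: "perms n \<noteq> {}"
  by (simp add: perms_eq_permutations_of_set)

lemma length_perms: "p \<in> perms n \<Longrightarrow> length p = n"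
  by (simp add: perms_eq_permutations_of_set length_finite_permutations_of_set)

lemma perms_completions:
  assumes "distinct u" "set u \<subseteq> {1..n}"
  shows "\<exists>v. u @ v \<in> perms n" "\<exists>v. v @ u \<in> perms n"
proof -
  let ?v = "sorted_list_of_set ({1..n} - set u)"
  show "\<exists>v. u @ v \<in> perms n" "\<exists>v. v @ u \<in> perms n"
    using assms by (auto simp: perms_def intro!: exI[of _ ?v])
qed

lemma shuffling_Suc_eq_map_pair:
  "shuffling n (Suc m) = map_pmf (\<lambda>(xs, p). xs @ p) (pair_pmf (shuffling n m) (pmf_of_set (perms n)))"
  by (simp add: pair_pmf_def map_pmf_def bind_assoc_pmf bind_return_pmf)

lemma set_pmf_shuffling:
  "set_pmf (shuffling n m) = {concat ps | ps. length ps = m \<and> set ps \<subseteq> perms n}"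
proof (induction m)
  case 0
  then show ?case by auto
next
  case (Suc m)
  have "set_pmf (shuffling n (Suc m)) = (\<Union>xs\<in>set_pmf (shuffling n m). \<Union>p\<in>perms n. {xs @ p})"
    using finite_perms perms_nonempty by simp
  also have "\<dots> = {concat ps | ps. length ps = Suc m \<and> set ps \<subseteq> perms n}"
  proof (intro equalityI subsetI)
    fix zs assume "zs \<in> (\<Union>xs\<in>set_pmf (shuffling n m). \<Union>p\<in>perms n. {xs @ p})"
    then obtain ps p where "length ps = m" "set ps \<subseteq> perms n" "p \<in> perms n" "zs = concat ps @ p"
      using Suc by auto
    then show "zs \<in> {concat ps | ps. length ps = Suc m \<and> set ps \<subseteq> perms n}"
      by (intro CollectI exI[of _ "ps @ [p]"]) auto
  next
    fix zs assume "zs \<in> {concat ps | ps. length ps = Suc m \<and> set ps \<subseteq> perms n}"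
    then obtain ps where ps: "length ps = Suc m" "set ps \<subseteq> perms n" "zs = concat ps"
      by auto
    then obtain qs p where "ps = qs @ [p]"
      by (metis length_Suc_conv_rev)
    with ps Suc show "zs \<in> (\<Union>xs\<in>set_pmf (shuffling n m). \<Union>p\<in>perms n. {xs @ p})"
      by auto
  qed
  finally show ?case .
qed

lemma length_concat_perms: "set ps \<subseteq> perms n \<Longrightarrow> length (concat ps) = length ps * n"
  by (induction ps) (auto simp: length_perms)

lemma length_shuffling: "xs \<in> set_pmf (shuffling n m) \<Longrightarrow> length xs = m * n"
  by (auto simp: set_pmf_shuffling length_concat_perms)

lemma set_shuffling_subset: "xs \<in> set_pmf (shuffling n m) \<Longrightarrow> set xs \<subseteq> {1..n}"
  by (fastforce simp: set_pmf_shuffling perms_def)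

definition prefix_prob :: "nat \<Rightarrow> nat \<Rightarrow> nat list \<Rightarrow> real" where
  "prefix_prob n m w = measure_pmf.prob (shuffling n m) {xs. take (length w) xs = w}"

lemma prefix_prob_Suc:
  "prefix_prob n (Suc m) w = prefix_prob n m (take (m * n) w) *
    measure_pmf.prob (pmf_of_set (perms n)) {p. take (length (drop (m * n) w)) p = drop (m * n) w}"
  unfolding prefix_prob_def shuffling_Suc_eq_map_pair
  by (rule prob_prefix_append_pair) (rule length_shuffling)

lemma prefix_prob_horizon_independent:
  assumes "length w \<le> m * n" "m \<le> m'"
  shows "prefix_prob n m' w = prefix_prob n m w"
  using assms(2)
proof (induction m' rule: dec_induct)
  case (step k)
  have "length w \<le> k * n"
    using assms(1) step(1) by (meson le_trans mult_le_mono1)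
  then show ?case
    using step.IH by (simp add: prefix_prob_Suc)
qed simp

lemma prefix_prob_snoc:
  assumes "length w = t" "t < m * n"
  shows "prefix_prob n m (w @ [a]) = prefix_prob n m w *
    (if a \<in> {1..n} - set (drop (t div n * n) w) then 1 / real (n - t mod n) else 0)"
proof -
  define q where "q = t div n"
  have "0 < n"
    using assms(2) by (auto intro: gr0I)
  then have q: "q * n \<le> t" "t < Suc q * n"
    unfolding q_def by (simp_all add: dividend_less_div_times)
  have "Suc q \<le> m"
    using assms(2) unfolding q_def by (simp add: Suc_leI less_mult_imp_div_less)
  have horizon: "prefix_prob n m v = prefix_prob n (Suc q) v" if "length v \<le> Suc q * n" for v
    using that \<open>Suc q \<le> m\<close> by (rule prefix_prob_horizon_independent)
  have epoch: "length (drop (q * n) w) = t mod n" "t mod n < n"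
    using assms(1) \<open>0 < n\<close> unfolding q_def by (simp_all add: minus_div_mult_eq_mod)
  let ?R = "\<lambda>u. measure_pmf.prob (pmf_of_set (perms n)) {p. take (length u) p = u}"
  have "prefix_prob n m (w @ [a]) = prefix_prob n q (take (q * n) w) * ?R (drop (q * n) w @ [a])"
    using q assms(1) by (simp add: horizon prefix_prob_Suc)
  moreover have "prefix_prob n m w = prefix_prob n q (take (q * n) w) * ?R (drop (q * n) w)"
    using q assms(1) by (simp add: horizon prefix_prob_Suc)
  moreover have "?R (drop (q * n) w @ [a]) =
      ?R (drop (q * n) w) * (if a \<in> {1..n} - set (drop (q * n) w) then 1 / real (n - t mod n) else 0)"
    unfolding perms_eq_permutations_of_set
    using epoch by (subst prob_permutation_prefix_snoc) (simp_all del: length_drop)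
  ultimately show ?thesis
    unfolding q_def by simp
qed

definition words :: "nat \<Rightarrow> nat \<Rightarrow> nat list set" where
  "words n k = {w. set w \<subseteq> {1..n} \<and> length w = k}"

lemma finite_words: "finite (words n k)"
  unfolding words_def by (rule finite_lists_length_eq) simp

lemma words_Suc: "words n (Suc k) = (\<lambda>(w, a). w @ [a]) ` (words n k \<times> {1..n})"
proof (intro equalityI subsetI)
  fix v assume v: "v \<in> words n (Suc k)"
  then have "v \<noteq> []"
    by (auto simp: words_def)
  with v have "v = butlast v @ [last v]" "butlast v \<in> words n k"
    by (auto simp: words_def dest: in_set_butlastD)
  moreover have "last v \<in> {1..n}"
    using v last_in_set[OF \<open>v \<noteq> []\<close>] unfolding words_def by auto
  ultimately show "v \<in> (\<lambda>(w, a). w @ [a]) ` (words n k \<times> {1..n})"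
    by (intro image_eqI[where x = "(butlast v, last v)"]) auto
qed (auto simp: words_def)

lemma prob_shuffling_prefix_in:
  assumes "k \<le> m * n"
  shows "measure_pmf.prob (shuffling n m) {xs. take k xs \<in> F} = (\<Sum>w\<in>words n k \<inter> F. prefix_prob n m w)"
proof -
  let ?Q = "map_pmf (take k) (shuffling n m)"
  have "set_pmf ?Q \<subseteq> words n k"
    using assms length_shuffling set_shuffling_subset
    by (fastforce simp: words_def dest: in_set_takeD)
  then have "measure_pmf.prob ?Q F = measure_pmf.prob ?Q (words n k \<inter> F)"
    by (intro measure_pmf.finite_measure_eq_AE) (auto simp: AE_measure_pmf_iff)
  also have "\<dots> = (\<Sum>w\<in>words n k \<inter> F. pmf ?Q w)"
    by (rule measure_measure_pmf_finite) (simp add: finite_words)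
  also have "\<dots> = (\<Sum>w\<in>words n k \<inter> F. prefix_prob n m w)"
    by (intro sum.cong) (auto simp: pmf_map prefix_prob_def words_def vimage_def)
  finally show ?thesis
    by (simp add: vimage_def)
qed

section \<open>Proper states\<close>

lemma aug_state_window:
  assumes "n \<le> t" "t \<le> length xs"
  shows "aug_state n xs t = (take n (drop (t - n) xs), (t - 1) mod n + 1)"
proof -
  have "map (\<lambda>j. X xs (t - n + j)) [1..<n+1] = take n (drop (t - n) xs)"
    using assms by (intro nth_equalityI) (auto simp: X_def simp del: upt_Suc)
  then show ?thesis
    by (simp add: aug_state_def)
qed

lemma aug_state_take:
  assumes "n \<le> i" "i \<le> k"
  shows "aug_state n (take k xs) i = aug_state n xs i"
  using assms by (auto simp: aug_state_def X_def)

lemma snd_aug_state_mod: "0 < t \<Longrightarrow> snd (aug_state n xs t) mod n = t mod n"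
  by (simp add: aug_state_def mod_Suc_eq)

lemma proper_epoch_split:
  assumes "p \<in> perms n" "p' \<in> perms n" "c \<in> {1..n}"
  shows "proper n (drop c p @ take c p', c)"
proof -
  have "length p = n" "length p' = n"
    using assms by (simp_all add: length_perms)
  moreover have "distinct p" "distinct p'" "set p \<subseteq> {1..n}" "set p' \<subseteq> {1..n}"
    using assms by (auto simp: perms_def)
  ultimately show ?thesis
    using assms(3) by (auto simp: proper_def dest: in_set_dropD in_set_takeD)
qed

lemma proper_obtain_epoch_split:
  assumes "proper n (A, c)"
  obtains p p' where "p \<in> perms n" "p' \<in> perms n" "A = drop c p @ take c p'"
proof -
  have A: "length A = n" "set A \<subseteq> {1..n}" "c \<le> n"
    "distinct (take (n - c) A)" "distinct (drop (n - c) A)"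
    using assms by (auto simp: proper_def)
  obtain v where p: "v @ take (n - c) A \<in> perms n"
    using A perms_completions(2)[of "take (n - c) A" n] by (meson order_trans set_take_subset)
  obtain v' where p': "drop (n - c) A @ v' \<in> perms n"
    using A perms_completions(1)[of "drop (n - c) A" n] by (meson order_trans set_drop_subset)
  have "length v = c"
    using length_perms[OF p] A by simp
  moreover have "length (drop (n - c) A) = c"
    using A by simp
  ultimately have "A = drop c (v @ take (n - c) A) @ take c (drop (n - c) A @ v')"
    by simp
  with p p' that show ?thesis
    by blast
qed

lemma aug_state_concat_perms:
  assumes "set ps \<subseteq> perms n" "Suc q < length ps" "c \<in> {1..n}"
  shows "aug_state n (concat ps) (Suc q * n + c) = (drop c (ps ! q) @ take c (ps ! Suc q), c)"
proof -
  have lengths: "\<forall>p\<in>set ps. length p = n"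
    using assms(1) length_perms by blast
  have "drop q ps = ps ! q # ps ! Suc q # drop (Suc (Suc q)) ps"
    using assms(2) by (simp add: Cons_nth_drop_Suc)
  then have "drop (q * n + c) (concat ps) = drop c (ps ! q) @ ps ! Suc q @ concat (drop (Suc (Suc q)) ps)"
    using drop_mult_concat[OF lengths, of q] lengths assms(2,3)
    by (simp add: drop_drop[symmetric] add.commute[of "q * n"])
  moreover have "length (concat ps) = length ps * n"
    using assms(1) by (rule length_concat_perms)
  moreover have "length (ps ! q) = n" "length (ps ! Suc q) = n"
    using lengths assms(2) by simp_all
  moreover have "(Suc q * n + c - 1) mod n = c - 1"
  proof -
    have "Suc q * n + c - 1 = (c - 1) + Suc q * n"
      using assms(3) by simp
    then have "(Suc q * n + c - 1) mod n = (c - 1) mod n"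
      by (simp only: mod_mult_self1)
    also have "\<dots> = c - 1"
      using assms(3) by (intro mod_less) auto
    finally show ?thesis .
  qed
  moreover have "Suc q * n + c \<le> length ps * n"
  proof -
    have "Suc (Suc q) * n \<le> length ps * n"
      using assms(2) by (intro mult_le_mono1) simp
    then show ?thesis
      using assms(3) by simp
  qed
  ultimately show ?thesis
    using assms(3) by (simp add: aug_state_window add.commute[of n])
qed

lemma obtain_epoch_position:
  assumes "0 < n" "n < t"
  obtains q c where "t = Suc q * n + c" "c \<in> {1..n}"
proof -
  define d where "d = (t - 1) div n"
  have "1 \<le> d"
    using assms unfolding d_def by (simp add: div_greater_zero_iff Suc_le_eq)
  then have "Suc (d - 1) = d"
    by simp
  moreover have "t - 1 = d * n + (t - 1) mod n"
    unfolding d_def by simp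
  then have "t = d * n + ((t - 1) mod n + 1)"
    using assms by linarith
  moreover have "(t - 1) mod n + 1 \<in> {1..n}"
    using assms(1) by (simp add: Suc_le_eq)
  ultimately show ?thesis
    using that[of "d - 1" "(t - 1) mod n + 1"] by simp
qed

lemma aug_state_in_state_space:
  assumes "xs \<in> set_pmf (shuffling n m)" "n \<le> t" "t \<le> m * n" "0 < n"
  shows "aug_state n xs t \<in> state_space n"
proof -
  obtain ps where ps: "xs = concat ps" "length ps = m" "set ps \<subseteq> perms n"
    using assms(1) by (auto simp: set_pmf_shuffling)
  show ?thesis
  proof (cases "t = n")
    case True
    have "0 < m"
      using assms by (auto intro: gr0I)
    then obtain p ps' where ps_eq: "ps = p # ps'"
      using ps(2) by (cases ps) auto
    then have p: "p \<in> perms n"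
      using ps(3) by simp
    then have "take n xs = drop n p @ take n p"
      using ps(1) ps_eq by (simp add: length_perms)
    moreover have "n \<le> length xs"
      using ps(1) ps_eq length_perms[OF p] by simp
    ultimately show ?thesis
      using True proper_epoch_split[OF p p, of n] assms(4) by (simp add: aug_state_window state_space_def)
  next
    case False
    then have "n < t"
      using assms(2) by simp
    then obtain q c where t: "t = Suc q * n + c" and c: "c \<in> {1..n}"
      by (rule obtain_epoch_position[OF assms(4)])
    have "Suc q * n < m * n"
      using assms(3) c unfolding t by simp
    then have "Suc q < m"
      by (simp only: mult_less_cancel2)
    then have "aug_state n xs t = (drop c (ps ! q) @ take c (ps ! Suc q), c)"
      using aug_state_concat_perms[OF ps(3) _ c, of q] ps unfolding t by simp
    moreover have "ps ! q \<in> perms n" "ps ! Suc q \<in> perms n"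
      using ps \<open>Suc q < m\<close> by auto
    ultimately show ?thesis
      using proper_epoch_split c by (simp add: state_space_def)
  qed
qed


lemma prob_aug_state_in_state_space:
  assumes "n \<le> t" "t \<le> m * n" "0 < n"
  shows "measure_pmf.prob (shuffling n m) {xs. aug_state n xs t \<in> state_space n} = 1"
  using assms aug_state_in_state_space
  by (subst measure_pmf.prob_eq_1) (auto simp: AE_measure_pmf_iff)

lemma finite_state_space: "finite (state_space n)"
proof (rule finite_subset)
  show "state_space n \<subseteq> words n n \<times> {1..n}"
    by (auto simp: state_space_def proper_def words_def)
  show "finite (words n n \<times> {1..n})"
    by (simp add: finite_words)
qed

section \<open>The transition kernel\<close>

text \<open>In a state \<open>(A, c)\<close> the last \<open>c\<close> entries of \<open>A\<close> are the symbols drawn so far in the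
  current epoch, which is complete when \<open>c = n\<close>. The next symbol is uniform among the
  \<open>n - c mod n\<close> symbols not drawn yet.\<close>

definition fresh_symbols :: "nat \<Rightarrow> nat list \<times> nat \<Rightarrow> nat set" where
  "fresh_symbols n s = {1..n} - (if snd s = n then {} else set (drop (n - snd s) (fst s)))"

definition shift_state :: "nat \<Rightarrow> nat list \<times> nat \<Rightarrow> nat \<Rightarrow> nat list \<times> nat" where
  "shift_state n s a = (tl (fst s) @ [a], snd s mod n + 1)"

definition shuffle_kernel :: "nat \<Rightarrow> nat list \<times> nat \<Rightarrow> nat list \<times> nat \<Rightarrow> real" where
  "shuffle_kernel n s s' =
    (if s' \<in> shift_state n s ` fresh_symbols n s then 1 / real (n - snd s mod n) else 0)"

lemma shuffle_kernel_nonneg: "0 \<le> shuffle_kernel n s s'"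
  by (simp add: shuffle_kernel_def)

lemma aug_state_snoc:
  assumes "length w = t" "n \<le> t" "0 < n"
  shows "aug_state n (w @ [a]) (Suc t) = shift_state n (aug_state n w t) a"
proof -
  have "take n (drop (Suc t - n) (w @ [a])) = tl (take n (drop (t - n) w)) @ [a]"
    using assms by (simp add: Suc_diff_le drop_Suc tl_drop tl_take)
  then show ?thesis
    using assms snd_aug_state_mod[of t n w]
    by (simp add: aug_state_window shift_state_def mod_Suc_eq)
qed

lemma fresh_symbols_aug_state:
  assumes "length w = t" "n \<le> t" "0 < n"
  shows "fresh_symbols n (aug_state n w t) = {1..n} - set (drop (t div n * n) w)"
proof -
  have "0 < t"
    using assms by simp
  define c where "c = (t - 1) mod n + 1"
  have c: "0 < c" "c \<le> n" "c mod n = t mod n"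
    using assms snd_aug_state_mod[OF \<open>0 < t\<close>, of n w]
    by (simp_all add: c_def aug_state_def Suc_le_eq)
  have aug: "aug_state n w t = (drop (t - n) w, c)"
    using assms by (simp add: aug_state_window c_def)
  show ?thesis
  proof (cases "c = n")
    case True
    then have "t div n * n = t"
      using c(3) by (simp add: minus_mod_eq_div_mult[symmetric])
    with True assms show ?thesis
      by (simp add: aug fresh_symbols_def)
  next
    case False
    then have "c = t mod n"
      using c by simp
    then have "n - c + (t - n) = t div n * n"
      using assms c(2) by (simp add: minus_mod_eq_div_mult[symmetric])
    with False show ?thesis
      by (simp add: aug fresh_symbols_def)
  qed
qed

lemma card_shift_state_preimage:
  "card {a \<in> A. shift_state n s a = s'} = (if s' \<in> shift_state n s ` A then 1 else 0)"
proof (cases "s' \<in> shift_state n s ` A")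
  case True
  then obtain a where "a \<in> A" "s' = shift_state n s a"
    by blast
  then have "{a \<in> A. shift_state n s a = s'} = {a}"
    by (auto simp: shift_state_def)
  with True show ?thesis
    by simp
next
  case False
  then have "{a \<in> A. shift_state n s a = s'} = {}"
    by blast
  then show ?thesis
    using False by (simp only: card.empty) simp
qed

lemma sum_prefix_prob_snoc:
  assumes "length w = t" "n \<le> t" "t < m * n"
  shows "(\<Sum>a\<in>{1..n}. if shift_state n (aug_state n w t) a = s' then prefix_prob n m (w @ [a]) else 0) =
    prefix_prob n m w * shuffle_kernel n (aug_state n w t) s'"
proof -
  let ?s = "aug_state n w t"
  let ?B = "{a \<in> fresh_symbols n ?s. shift_state n ?s a = s'}"
  have "0 < n"
    using assms(3) by (auto intro: gr0I)
  then have rate: "1 / real (n - snd ?s mod n) = 1 / real (n - t mod n)"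
    using assms(2) by (simp add: snd_aug_state_mod)
  have "(\<Sum>a\<in>{1..n}. if shift_state n ?s a = s' then prefix_prob n m (w @ [a]) else 0) =
      (\<Sum>a\<in>{1..n}. if a \<in> ?B then prefix_prob n m w * (1 / real (n - t mod n)) else 0)"
    using assms \<open>0 < n\<close> by (intro sum.cong) (auto simp: prefix_prob_snoc fresh_symbols_aug_state)
  also have "\<dots> = (\<Sum>a\<in>{1..n} \<inter> ?B. prefix_prob n m w * (1 / real (n - t mod n)))"
    by (rule sum.inter_restrict[symmetric]) simp
  also have "\<dots> = (\<Sum>a\<in>?B. prefix_prob n m w * (1 / real (n - t mod n)))"
    by (rule sum.cong) (auto simp: fresh_symbols_def)
  also have "\<dots> = prefix_prob n m w * shuffle_kernel n ?s s'"
    by (simp add: card_shift_state_preimage shuffle_kernel_def rate del: One_nat_def)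
  finally show ?thesis .
qed

lemma aug_state_path_snoc_iff:
  assumes "length w = t" "n \<le> t" "0 < n"
  shows "(\<forall>i\<in>{n..Suc t}. aug_state n (w @ [a]) i = y i) \<longleftrightarrow>
    (\<forall>i\<in>{n..t}. aug_state n w i = y i) \<and> shift_state n (aug_state n w t) a = y (Suc t)"
proof -
  have "aug_state n (w @ [a]) i = aug_state n w i" if "i \<in> {n..t}" for i
    using aug_state_take[of n i t "w @ [a]"] that assms(1) by simp
  moreover have "{n..Suc t} = insert (Suc t) {n..t}"
    using assms(2) by auto
  ultimately show ?thesis
    using aug_state_snoc[OF assms] by auto
qed

lemma sum_prefix_prob_path_snoc:
  assumes "length w = t" "n \<le> t" "t < m * n"
  shows "(\<Sum>a\<in>{1..n}. if \<forall>i\<in>{n..Suc t}. aug_state n (w @ [a]) i = y i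
      then prefix_prob n m (w @ [a]) else 0) =
    (if \<forall>i\<in>{n..t}. aug_state n w i = y i
      then prefix_prob n m w * shuffle_kernel n (y t) (y (Suc t)) else 0)"
proof -
  have "0 < n"
    using assms(3) by (auto intro: gr0I)
  note snoc_iff = aug_state_path_snoc_iff[OF assms(1,2) this, of _ y]
  show ?thesis
  proof (cases "\<forall>i\<in>{n..t}. aug_state n w i = y i")
    case True
    then have "aug_state n w t = y t"
      using assms(2) by simp
    with True show ?thesis
      using snoc_iff sum_prefix_prob_snoc[OF assms, of "y (Suc t)"] by simp
  next
    case False
    then have "(\<forall>i\<in>{n..t}. aug_state n w i = y i) = False"
      by blast
    then show ?thesis
      by (simp only: snoc_iff simp_thms if_False sum.neutral_const)
  qed
qed


lemma prob_aug_path_Suc: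
  assumes "n \<le> t" "t + 1 \<le> m * n"
  shows "measure_pmf.prob (shuffling n m) {xs. \<forall>i\<in>{n..t+1}. aug_state n xs i = y i} =
    measure_pmf.prob (shuffling n m) {xs. \<forall>i\<in>{n..t}. aug_state n xs i = y i} *
    shuffle_kernel n (y t) (y (t+1))"
proof -
  define E where "E k = {w. \<forall>i\<in>{n..k}. aug_state n w i = y i}" for k
  have event: "{xs. \<forall>i\<in>{n..k}. aug_state n xs i = y i} = {xs. take k xs \<in> E k}" for k
    unfolding E_def using aug_state_take by auto
  have "measure_pmf.prob (shuffling n m) {xs. \<forall>i\<in>{n..t+1}. aug_state n xs i = y i} =
      (\<Sum>v\<in>words n (Suc t). if v \<in> E (Suc t) then prefix_prob n m v else 0)"
    unfolding event using assms by (simp add: prob_shuffling_prefix_in sum.inter_restrict finite_words)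
  also have "\<dots> = (\<Sum>(w, a)\<in>words n t \<times> {1..n}. if w @ [a] \<in> E (Suc t) then prefix_prob n m (w @ [a]) else 0)"
    unfolding words_Suc by (subst sum.reindex) (auto simp: inj_on_def case_prod_unfold)
  also have "\<dots> = (\<Sum>w\<in>words n t. \<Sum>a\<in>{1..n}. if w @ [a] \<in> E (Suc t) then prefix_prob n m (w @ [a]) else 0)"
    by (rule sum.cartesian_product[symmetric])
  also have "\<dots> = (\<Sum>w\<in>words n t. if w \<in> E t then prefix_prob n m w * shuffle_kernel n (y t) (y (Suc t)) else 0)"
  proof (rule sum.cong[OF refl])
    fix w assume "w \<in> words n t"
    then have "length w = t"
      by (simp add: words_def)
    from sum_prefix_prob_path_snoc[OF this assms(1), of m y] assms(2)
    show "(\<Sum>a\<in>{1..n}. if w @ [a] \<in> E (Suc t) then prefix_prob n m (w @ [a]) else 0) =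
        (if w \<in> E t then prefix_prob n m w * shuffle_kernel n (y t) (y (Suc t)) else 0)"
      by (simp add: E_def)
  qed
  also have "\<dots> = (\<Sum>w\<in>words n t \<inter> E t. prefix_prob n m w) * shuffle_kernel n (y t) (y (Suc t))"
    by (auto simp: sum.inter_restrict finite_words sum_distrib_right intro!: sum.cong)
  also have "\<dots> = measure_pmf.prob (shuffling n m) {xs. \<forall>i\<in>{n..t}. aug_state n xs i = y i} *
      shuffle_kernel n (y t) (y (Suc t))"
    unfolding event using assms by (simp add: prob_shuffling_prefix_in)
  finally show ?thesis
    by simp
qed


lemma proper_shift_into_new_epoch:
  assumes "p \<in> perms n" "a \<in> {1..n}"
  shows "proper n (tl p @ [a], 1)"
proof -
  obtain v where v: "[a] @ v \<in> perms n"
    using assms(2) perms_completions(1)[of "[a]" n] by auto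
  have "tl p @ [a] = drop 1 p @ take 1 ([a] @ v)"
    by (simp add: drop_Suc)
  then show ?thesis
    using proper_epoch_split[OF assms(1) v, of 1] assms(2) by simp
qed

lemma proper_shift_within_epoch:
  assumes "p \<in> perms n" "p' \<in> perms n" "c < n" "a \<in> {1..n} - set (take c p')"
  shows "proper n (tl (drop c p @ take c p') @ [a], Suc c)"
proof -
  have "distinct (take c p' @ [a])" "set (take c p' @ [a]) \<subseteq> {1..n}"
    using assms(2,4) by (auto simp: perms_def dest: in_set_takeD)
  then obtain v where v: "(take c p' @ [a]) @ v \<in> perms n"
    using perms_completions(1) by blast
  have "drop c p = p ! c # drop (Suc c) p"
    using assms(1,3) by (simp add: Cons_nth_drop_Suc length_perms)
  moreover have "take (Suc c) ((take c p' @ [a]) @ v) = take c p' @ [a]"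
    using assms(2,3) by (simp add: length_perms)
  ultimately have "tl (drop c p @ take c p') @ [a] = drop (Suc c) p @ take (Suc c) ((take c p' @ [a]) @ v)"
    by simp
  then show ?thesis
    using proper_epoch_split[OF assms(1) v, of "Suc c"] assms(3) by simp
qed

lemma shift_state_in_state_space:
  assumes s: "s \<in> state_space n" and a: "a \<in> fresh_symbols n s"
  shows "shift_state n s a \<in> state_space n"
proof -
  obtain A c where s_eq: "s = (A, c)"
    by fastforce
  have c: "c \<in> {1..n}"
    using s by (simp add: s_eq state_space_def proper_def)
  obtain p p' where p: "p \<in> perms n" "p' \<in> perms n" and A: "A = drop c p @ take c p'"
    using s by (auto simp: s_eq state_space_def elim: proper_obtain_epoch_split)
  show ?thesis
  proof (cases "c = n")
    case True
    then have "A = p'"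
      using p by (simp add: A length_perms)
    with True a show ?thesis
      using proper_shift_into_new_epoch[OF p(2)]
      by (simp add: s_eq shift_state_def fresh_symbols_def state_space_def)
  next
    case False
    then have "c < n"
      using c by simp
    then have "drop (n - c) A = take c p'"
      using p by (simp add: A length_perms)
    then have "a \<in> {1..n} - set (take c p')"
      using False a by (simp add: s_eq fresh_symbols_def)
    then show ?thesis
      using proper_shift_within_epoch[OF p \<open>c < n\<close>] \<open>c < n\<close>
      by (simp add: s_eq A shift_state_def state_space_def)
  qed
qed

lemma card_fresh_symbols:
  assumes "s \<in> state_space n"
  shows "card (fresh_symbols n s) = n - snd s mod n"
proof (cases "snd s = n")
  case False
  obtain A c where s: "s = (A, c)"
    by fastforce
  have "length A = n" "set A \<subseteq> {1..n}" "c \<in> {1..n}" "distinct (drop (n - c) A)"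
    using assms by (auto simp: s state_space_def proper_def)
  moreover have "set (drop (n - c) A) \<subseteq> {1..n}"
    using calculation(2) by (meson order_trans set_drop_subset)
  ultimately show ?thesis
    using False by (simp add: s fresh_symbols_def card_Diff_subset distinct_card)
qed (simp add: fresh_symbols_def)

lemma sum_shuffle_kernel:
  assumes "s \<in> state_space n"
  shows "(\<Sum>y\<in>state_space n. shuffle_kernel n s y) = 1"
proof -
  let ?T = "shift_state n s ` fresh_symbols n s"
  have "0 < n"
    using assms by (auto simp: state_space_def proper_def split: prod.splits)
  then have "0 < n - snd s mod n"
    by simp
  have "?T \<subseteq> state_space n"
    using shift_state_in_state_space[OF assms] by blast
  then have "(\<Sum>y\<in>state_space n. shuffle_kernel n s y) = (\<Sum>y\<in>?T. 1 / real (n - snd s mod n))"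
    unfolding shuffle_kernel_def
    by (simp add: sum.inter_restrict[symmetric] finite_state_space Int_absorb1)
  also have "\<dots> = real (card (fresh_symbols n s)) / real (n - snd s mod n)"
    by (simp add: card_image inj_on_def shift_state_def)
  also have "\<dots> = 1"
    using card_fresh_symbols[OF assms] \<open>0 < n - snd s mod n\<close> by simp
  finally show ?thesis .
qed

section \<open>Irreducibility and period\<close>

text \<open>The trajectory of a realisation has positive probability, so by the factorisation of
  path probabilities every step along it has positive kernel weight.\<close>

lemma shuffle_kernel_aug_state_pos:
  assumes xs: "xs \<in> set_pmf (shuffling n m)" and "n \<le> j" "j < m * n"
  shows "0 < shuffle_kernel n (aug_state n xs j) (aug_state n xs (Suc j))"
proof -
  let ?path = "\<lambda>k. {xs'. \<forall>i\<in>{n..k}. aug_state n xs' i = aug_state n xs i}"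
  have "0 < measure_pmf.prob (shuffling n m) (?path (j + 1))"
    using xs by (intro measure_pmf_posI) auto
  also have "\<dots> = measure_pmf.prob (shuffling n m) (?path j) * shuffle_kernel n (aug_state n xs j) (aug_state n xs (j + 1))"
    using assms by (intro prob_aug_path_Suc) auto
  finally show ?thesis
    using shuffle_kernel_nonneg[of n] by (simp add: zero_less_mult_iff)
qed

lemma kstep_aug_state_pos:
  assumes xs: "xs \<in> set_pmf (shuffling n m)" and "n \<le> i" "i \<le> j" "j \<le> m * n" "0 < n"
  shows "0 < kstep (shuffle_kernel n) (state_space n) (j - i) (aug_state n xs i) (aug_state n xs j)"
  using assms(3,4)
proof (induction j rule: dec_induct)
  case (step k)
  have "0 < kstep (shuffle_kernel n) (state_space n) (Suc (k - i)) (aug_state n xs i) (aug_state n xs (Suc k))"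
    using step assms
    by (intro kstep_Suc_pos[OF shuffle_kernel_nonneg finite_state_space, of "aug_state n xs k"]
        aug_state_in_state_space[OF xs] shuffle_kernel_aug_state_pos[OF xs]) auto
  with step show ?case
    by (simp add: Suc_diff_le)
qed simp

text \<open>Two permutations realising \<open>x\<close> at their junction, then \<open>k - 2\<close> arbitrary ones, then two
  realising \<open>x'\<close> form a realisation that visits \<open>x\<close> at time \<open>n + c\<close> and \<open>x'\<close> at time
  \<open>(k + 1) n + c'\<close>.\<close>

lemma kstep_shuffle_kernel_pos:
  assumes x: "x \<in> state_space n" and x': "x' \<in> state_space n" and "2 \<le> k" "0 < n"
  shows "0 < kstep (shuffle_kernel n) (state_space n) (k * n + snd x' - snd x) x x'"
proof -
  obtain A c A' c' where xs: "x = (A, c)" "x' = (A', c')"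
    by fastforce
  have c: "c \<in> {1..n}" "c' \<in> {1..n}"
    using x x' by (simp_all add: xs state_space_def proper_def)
  obtain p0 p1 where p: "p0 \<in> perms n" "p1 \<in> perms n" "A = drop c p0 @ take c p1"
    using x by (auto simp: xs state_space_def elim: proper_obtain_epoch_split)
  obtain p0' p1' where p': "p0' \<in> perms n" "p1' \<in> perms n" "A' = drop c' p0' @ take c' p1'"
    using x' by (auto simp: xs state_space_def elim: proper_obtain_epoch_split)
  obtain j where j: "k = j + 2"
    using assms(3) by (metis add.commute le_Suc_ex)
  define ps where "ps = [p0, p1] @ replicate j p0 @ [p0', p1']"
  have ps: "set ps \<subseteq> perms n" "length ps = k + 2"
    using p p' by (auto simp: ps_def j)
  then have xs_supp: "concat ps \<in> set_pmf (shuffling n (k + 2))"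
    unfolding set_pmf_shuffling by blast
  have "ps ! k = p0'" "ps ! Suc k = p1'"
    by (simp_all add: ps_def nth_append j)
  then have x'_at: "aug_state n (concat ps) (Suc k * n + c') = x'"
    using aug_state_concat_perms[OF ps(1) _ c(2), of k] ps(2) by (simp add: xs p')
  have x_at: "aug_state n (concat ps) (Suc 0 * n + c) = x"
    using aug_state_concat_perms[OF ps(1) _ c(1), of 0] ps(2) assms(3) by (simp add: xs p ps_def)
  have "n \<le> k * n" "c \<le> n"
    using assms(3) c(1) by simp_all
  then have "c \<le> k * n + c'"
    by linarith
  then have "0 < kstep (shuffle_kernel n) (state_space n) (Suc k * n + c' - (Suc 0 * n + c))
      (aug_state n (concat ps) (Suc 0 * n + c)) (aug_state n (concat ps) (Suc k * n + c'))"
    using c assms(4) by (intro kstep_aug_state_pos[OF xs_supp]) auto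
  then show ?thesis
    unfolding x_at x'_at by (simp add: xs)
qed

lemma kstep_shuffle_kernel_position:
  assumes "x \<in> state_space n" "kstep (shuffle_kernel n) (state_space n) k x y \<noteq> 0"
  shows "snd y = (snd x - 1 + k) mod n + 1"
  using assms(2)
proof (induction k arbitrary: y)
  case 0
  then have "y = x"
    by (simp split: if_splits)
  moreover have "snd x \<in> {1..n}"
    using assms(1) by (auto simp: state_space_def proper_def)
  moreover from this have "(snd x - 1) mod n = snd x - 1"
    by (intro mod_less) auto
  ultimately show ?case
    by simp
next
  case (Suc k)
  then have "(\<Sum>z\<in>state_space n. kstep (shuffle_kernel n) (state_space n) k x z * shuffle_kernel n z y) \<noteq> 0"
    by simp
  then obtain z where kstep_z: "kstep (shuffle_kernel n) (state_space n) k x z \<noteq> 0"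
    and kernel_z: "shuffle_kernel n z y \<noteq> 0"
    by (rule sum.not_neutral_contains_not_neutral) auto
  from kstep_z have "snd z = (snd x - 1 + k) mod n + 1"
    by (rule Suc.IH)
  moreover from kernel_z have "y \<in> shift_state n z ` fresh_symbols n z"
    by (simp add: shuffle_kernel_def split: if_splits)
  ultimately show ?case
    by (auto simp: shift_state_def mod_Suc_eq)
qed

lemma shuffle_kernel_return_dvd:
  assumes "x \<in> state_space n" "0 < kstep (shuffle_kernel n) (state_space n) k x x"
  shows "n dvd k"
proof -
  define c where "c = snd x"
  have c: "1 \<le> c" "c \<le> n"
    using assms(1) by (auto simp: c_def state_space_def proper_def split: prod.splits)
  have "kstep (shuffle_kernel n) (state_space n) k x x \<noteq> 0"
    using assms(2) by simp
  then have "c = (c - 1 + k) mod n + 1"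
    unfolding c_def by (rule kstep_shuffle_kernel_position[OF assms(1)])
  then have "(c - 1 + k) mod n = (c - 1) mod n"
    using c by simp
  then show ?thesis
    by (simp add: mod_eq_dvd_iff_nat)
qed

theorem propositionH2:
  fixes n :: nat
  assumes "n \<ge> 2"
  shows "finite (state_space n) \<and>
    (\<exists>K. markov_with n K \<and> stochastic_on K (state_space n) \<and>
         irreducible_on K (state_space n) \<and>
         (\<forall>x\<in>state_space n. period K (state_space n) x = n))"
proof -
  let ?K = "shuffle_kernel n" and ?S = "state_space n"
  have "0 < n"
    using assms by simp
  have "markov_with n ?K"
    unfolding markov_with_def using prob_aug_state_in_state_space prob_aug_path_Suc \<open>0 < n\<close> by auto
  moreover have "stochastic_on ?K ?S"
    unfolding stochastic_on_def using shuffle_kernel_nonneg sum_shuffle_kernel by auto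
  moreover have "irreducible_on ?K ?S"
    unfolding irreducible_on_def using kstep_shuffle_kernel_pos[of _ n _ 2] \<open>0 < n\<close> by blast
  moreover have "period ?K ?S x = n" if "x \<in> ?S" for x
    using kstep_shuffle_kernel_pos[OF that that _ \<open>0 < n\<close>, of 2] kstep_shuffle_kernel_pos[OF that that _ \<open>0 < n\<close>, of 3]
    by (intro period_eqI shuffle_kernel_return_dvd[OF that] \<open>0 < n\<close>) auto
  ultimately show ?thesis
    using finite_state_space by blast
qed

end
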